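(* Let $\nu_2$ be the probability measure on $[-2,2]$ with Cauchy–Stieltjes transform $T_2(z)=G(z)^{1/2}(z^2-4)^{-1/4}$ for real $z>2$ (equivalently, density proportional to $\cos[\frac12\arcsin\frac x2](4-x^2)^{-1/4}$ on $(-2,2)$). Let $K_2(w)=\dfrac{2w^2+1}{w\sqrt{1+w^2}}$. Then for all sufficiently small $w>0$, $K_2(w)>2$ and $T_2(K_2(w))=w$. Moreover, for $0<|w|<1$, $$K_2(w)=\frac1w+\sum_{k\ge0}r_{2k+1}w^{2k+1},\qquad r_{2k+1}=(-1)^k\left[\frac{(1/2)_k}{k!}+\frac12\frac{(1/2)_k}{(k+1)!}\right]=(-1)^k\frac{(1/2)_k\,(k+3/2)}{(k+1)!},$$ equivalently $(-1)^k2^{2k+1}r_{2k+1}=2\binom{2k}{k}+\frac1{k+1}\binom{2k}k$. In particular the free cumulants of $\nu_2$ are $\kappa_{2k+2}(\nu_2)=r_{2k+1}$ for $k\ge0$ (so the variance is $3/2$) and $\kappa_{2k+1}(\nu_2)=0$.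
   Context: $G(z)=\frac{z-\sqrt{z^2-4}}{2}$ is the Cauchy–Stieltjes transform of the standard Wigner law (positive for real $z>2$). $(a)_k$ is the Pochhammer symbol. The free cumulants $\kappa_j$ of a compactly supported probability measure with Cauchy–Stieltjes transform $T$ are defined by $T^{-1}(w)=\frac1w+\sum_{j\ge1}\kappa_j w^{j-1}$ for small $w$. *)

theory Defs
  imports "HOL-Analysis.Analysis" "HOL-Probability.Probability"
begin

text \<open>Cauchy--Stieltjes transform of the standard Wigner law, for real z > 2.\<close>
definition G :: "real \<Rightarrow> real" where
  "G z = (z - sqrt (z\<^sup>2 - 4)) / 2"

definition T2 :: "real \<Rightarrow> real" where
  "T2 z = sqrt (G z) * (z\<^sup>2 - 4) powr (-1/4)"

definition K2 :: "real \<Rightarrow> real" where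
  "K2 w = (2 * w\<^sup>2 + 1) / (w * sqrt (1 + w\<^sup>2))"

text \<open>Coefficient r_{2k+1}, indexed by k.\<close>
definition r :: "nat \<Rightarrow> real" where
  "r k = (-1) ^ k * (pochhammer (1/2) k / fact k + (1/2) * (pochhammer (1/2) k / fact (k + 1)))"

definition cst :: "real measure \<Rightarrow> real \<Rightarrow> real" where
  "cst \<mu> z = (\<integral>x. 1 / (z - x) \<partial>\<mu>)"

text \<open>kappa (indexed from 1; kappa 0 is fixed to 0 as a normalisation) is the sequence of
  free cumulants of mu: for small w > 0 the power series converges and
  T(1/w + sum_{j>=1} kappa_j w^(j-1)) = w, i.e. this series is the inverse of T.\<close>
definition is_free_cumulant_seq :: "real measure \<Rightarrow> (nat \<Rightarrow> real) \<Rightarrow> bool" where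
  "is_free_cumulant_seq \<mu> \<kappa> \<longleftrightarrow> \<kappa> 0 = 0 \<and>
     (\<exists>\<delta>>0. \<forall>w. 0 < w \<and> w < \<delta> \<longrightarrow>
        summable (\<lambda>j. \<kappa> (Suc j) * w ^ j) \<and>
        cst \<mu> (1 / w + (\<Sum>j. \<kappa> (Suc j) * w ^ j)) = w)"

definition free_cumulant :: "real measure \<Rightarrow> nat \<Rightarrow> real" where
  "free_cumulant \<mu> j = (THE \<kappa>. is_free_cumulant_seq \<mu> \<kappa>) j"

end

theory Submission
  imports Defs
begin

text \<open>
  Everything rests on explicit algebra with square roots.
  (1) Writing K2 w = sqrt (4 + 1/(w^2 (1+w^2))) for w > 0 shows K2 w > 2, and a direct
      computation with G gives T2 (K2 w) = w and, conversely, K2 (T2 z) = z for z > 2;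
      in particular T2 is injective on (2, \<infinity>).
  (2) The coefficients r k are identified three ways: in Pochhammer form, as
      binom(-1/2, k+1) + 2 binom(-1/2, k), and via central binomial coefficients
      (using the library identity fact_double).
  (3) Since K2 w - 1/w = ((1+w^2)^(-1/2) - 1)/w + 2 w (1+w^2)^(-1/2), the generalised
      binomial series for (1+x)^(-1/2) at x = w^2 yields the expansion of K2 w - 1/w.
  (4) For the free cumulants: any two power series inverting an injective transform on
      a right neighbourhood of 0 coincide (an identity theorem for power series on
      (0, \<delta>)), so the series from (3), padded with zeros in the odd places, is the
      unique free cumulant sequence of \<nu>2.
\<close>

lemma sq_minus_4_pos:
  fixes z :: real assumes "z > 2"
  shows "z\<^sup>2 - 4 > 0"
proof -
  have "2 * 2 < z * z"
    using assms by (intro mult_strict_mono) auto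
  then show ?thesis by (simp add: power2_eq_square)
qed

text \<open>The identity (2w^2+1)^2 = 4 w^2 (1+w^2) + 1 puts K2 in a form that
  makes K2 w > 2 and the inversion of T2 transparent.\<close>
lemma K2_sqrt_form:
  fixes w :: real assumes "w > 0"
  shows "K2 w = sqrt (4 + 1 / (w\<^sup>2 * (1 + w\<^sup>2)))"
proof -
  have d: "w\<^sup>2 * (1 + w\<^sup>2) > 0" using assms by (simp add: add_pos_pos)
  have "(K2 w)\<^sup>2 = (2 * w\<^sup>2 + 1)\<^sup>2 / (w\<^sup>2 * (1 + w\<^sup>2))"
    unfolding K2_def by (simp add: power_divide power_mult_distrib add_nonneg_nonneg)
  also have "(2 * w\<^sup>2 + 1)\<^sup>2 = 4 * (w\<^sup>2 * (1 + w\<^sup>2)) + 1"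
    by (simp add: algebra_simps power2_eq_square)
  also have "(4 * (w\<^sup>2 * (1 + w\<^sup>2)) + 1) / (w\<^sup>2 * (1 + w\<^sup>2)) = 4 + 1 / (w\<^sup>2 * (1 + w\<^sup>2))"
    using d by (simp add: field_simps)
  finally have "(K2 w)\<^sup>2 = 4 + 1 / (w\<^sup>2 * (1 + w\<^sup>2))" .
  moreover have "K2 w > 0" using assms unfolding K2_def by (simp add: add_pos_pos)
  ultimately show ?thesis by (simp add: real_sqrt_unique)
qed

lemma K2_gt_2:
  fixes w :: real assumes "w > 0"
  shows "K2 w > 2"
proof -
  have "(2::real) = sqrt 4" by simp
  also have "\<dots> < sqrt (4 + 1 / (w\<^sup>2 * (1 + w\<^sup>2)))"
    using assms by (intro real_sqrt_less_mono) (simp add: add_pos_pos)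
  finally show ?thesis using K2_sqrt_form[OF assms] by simp
qed

lemma T2_sqrt_form:
  fixes z :: real assumes "z > 2"
  shows "T2 z = sqrt (G z / sqrt (z\<^sup>2 - 4))"
proof -
  have p: "z\<^sup>2 - 4 \<ge> 0" using sq_minus_4_pos[OF assms] by simp
  have "(z\<^sup>2 - 4) powr (-1/4) = inverse (((z\<^sup>2 - 4) powr (1/2)) powr (1/2))"
    using p by (simp add: powr_powr powr_minus)
  also have "\<dots> = inverse (sqrt (sqrt (z\<^sup>2 - 4)))"
    by (simp only: powr_half_sqrt[OF p] powr_half_sqrt[OF real_sqrt_ge_zero[OF p]])
  finally have "(z\<^sup>2 - 4) powr (-1/4) = inverse (sqrt (sqrt (z\<^sup>2 - 4)))" .
  moreover have "sqrt (G z / sqrt (z\<^sup>2 - 4)) = sqrt (G z) * inverse (sqrt (sqrt (z\<^sup>2 - 4)))"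
    by (subst real_sqrt_divide) (rule divide_inverse)
  ultimately show ?thesis unfolding T2_def by simp
qed

text \<open>For z = K2 w one has sqrt (z^2-4) = 1/(w sqrt (1+w^2)) and G z = w / sqrt (1+w^2).\<close>
lemma T2_K2:
  fixes w :: real assumes w: "w > 0"
  shows "T2 (K2 w) = w"
proof -
  define s where "s = sqrt (1 + w\<^sup>2)"
  have s: "s > 0" unfolding s_def by (simp add: add_pos_nonneg)
  have "(K2 w)\<^sup>2 - 4 = (1 / (w * s))\<^sup>2"
    unfolding K2_sqrt_form[OF w] s_def
    using w by (simp add: power_divide power_mult_distrib add_pos_nonneg)
  then have root: "sqrt ((K2 w)\<^sup>2 - 4) = 1 / (w * s)"
    using w s by simp
  have "G (K2 w) = w / s"
    unfolding G_def root unfolding K2_def s_def[symmetric] using w s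
    by (simp add: field_simps) (simp add: s_def power2_eq_square algebra_simps)
  then have "G (K2 w) / sqrt ((K2 w)\<^sup>2 - 4) = w\<^sup>2"
    unfolding root using w s by (simp add: field_simps power2_eq_square)
  then show ?thesis
    using T2_sqrt_form[OF K2_gt_2[OF w]] w by simp
qed

text \<open>Conversely, t = T2 z satisfies t^2 (1+t^2) = 1/(z^2-4), hence K2 t = z.\<close>
lemma K2_T2:
  fixes z :: real assumes z: "z > 2"
  shows "K2 (T2 z) = z"
proof -
  define s where "s = sqrt (z\<^sup>2 - 4)"
  have ss: "s\<^sup>2 = z\<^sup>2 - 4" and s0: "s > 0"
    using sq_minus_4_pos[OF z] unfolding s_def by simp_all
  have "s\<^sup>2 < z\<^sup>2" using ss by linarith
  then have "s < z" by (rule power2_less_imp_less) (use z in simp)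
  then have Gs: "G z / s > 0"
    using s0 unfolding G_def s_def[symmetric] by simp
  define t where "t = T2 z"
  have t0: "t > 0" and t2: "t\<^sup>2 = (z - s) / (2 * s)"
    using Gs T2_sqrt_form[OF z] unfolding t_def s_def[symmetric] G_def by simp_all
  have "t\<^sup>2 * (1 + t\<^sup>2) = (z - s) * (z + s) / (4 * s\<^sup>2)"
    unfolding t2 using s0 by (simp add: field_simps power2_eq_square)
  also have "(z - s) * (z + s) = 4"
    using ss by (simp add: algebra_simps power2_eq_square)
  finally have "1 / (t\<^sup>2 * (1 + t\<^sup>2)) = s\<^sup>2"
    using s0 by simp
  then show ?thesis
    using K2_sqrt_form[OF t0] ss z unfolding t_def by simp
qed

text \<open>Injectivity of T2 on (2, \<infinity>) is what makes the free cumulants unique.\<close>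
lemma T2_inj_on: "inj_on T2 {2<..}"
  by (rule inj_on_inverseI[where g = K2]) (simp add: K2_T2)

text \<open>The splitting of K2 w - 1/w that reduces its expansion to the binomial series.\<close>
lemma K2_minus_reciprocal:
  fixes w :: real assumes "w \<noteq> 0"
  shows "K2 w - 1 / w = (1 / sqrt (1 + w\<^sup>2) - 1) / w + 2 * w * (1 / sqrt (1 + w\<^sup>2))"
proof -
  define s where "s = sqrt (1 + w\<^sup>2)"
  have "s > 0" unfolding s_def by (simp add: add_pos_nonneg)
  then show ?thesis
    unfolding K2_def s_def[symmetric] using assms by (simp add: field_simps power2_eq_square)
qed

lemma central_binomial_pochhammer:
  "real ((2 * k) choose k) = 4 ^ k * pochhammer (1/2) k / fact k"
proof -
  have "real ((2 * k) choose k) = fact (2 * k) / (fact k * fact k)"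
    using binomial_fact[of k "2 * k"] by simp
  also have "\<dots> = 4 ^ k * pochhammer (1/2) k / fact k"
    by (simp add: fact_double power_mult)
  finally show ?thesis .
qed

lemma gchoose_minus_half:
  "((-1/2::real) gchoose k) = (-1) ^ k * pochhammer (1/2) k / fact k"
  by (simp add: gbinomial_pochhammer)

lemma r_pochhammer:
  "r k = (-1) ^ k * pochhammer (1/2) k * (real k + 3/2) / fact (k + 1)"
proof -
  have regroup: "s * (p / F + 1/2 * (p / (m * F))) = s * p * (m + 1/2) / (m * F)"
    if "F \<noteq> 0" "m \<noteq> 0" for s p F m :: real
    using that by (simp add: field_simps)
  have "real k + 3/2 = (real k + 1) + 1/2" "fact (k + 1) = (real k + 1) * fact k"
    by simp_all
  then show ?thesis
    unfolding r_def by (simp only:) (rule regroup; simp)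
qed

text \<open>r k is the coefficient combination produced by the splitting of K2 w - 1/w.\<close>
lemma r_gchoose:
  "r k = ((-1/2::real) gchoose Suc k) + 2 * ((-1/2) gchoose k)"
proof -
  have regroup: "s * p * (m + 1/2) / (m * F) = (-1) * s * (p * (m - 1/2)) / (m * F) + 2 * (s * p / F)"
    if "F \<noteq> 0" "m \<noteq> 0" for s p F m :: real
    using that by (simp add: field_simps)
  have "real k + 3/2 = (real k + 1) + 1/2" "1/2 + real k = (real k + 1) - 1/2"
    "fact (k + 1) = (real k + 1) * fact k" "fact (Suc k) = (real k + 1) * fact k"
    by simp_all
  then show ?thesis
    unfolding r_pochhammer gchoose_minus_half pochhammer_Suc power_Suc
    by (simp only:) (rule regroup; simp)
qed

lemma r_central_binomial:
  "(-1) ^ k * 2 ^ (2 * k + 1) * r k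
     = 2 * real ((2 * k) choose k) + real ((2 * k) choose k) / (real k + 1)"
proof -
  have regroup: "s * (2 * c) * (s * p * (m + 1/2) / (m * F)) = 2 * (c * p / F) * (m + 1/2) / m"
    if "F \<noteq> 0" "m \<noteq> 0" "s * s = 1" for s p F m c :: real
  proof -
    have "s * (2 * c) * (s * p * (m + 1/2) / (m * F)) = (s * s) * (2 * (c * p / F) * (m + 1/2) / m)"
      using that(1,2) by (simp add: field_simps)
    then show ?thesis using that(3) by simp
  qed
  have "real k + 3/2 = (real k + 1) + 1/2" "fact (k + 1) = (real k + 1) * fact k"
    "(2::real) ^ (2 * k + 1) = 2 * 4 ^ k"
    by (simp_all add: power_mult)
  then have "(-1) ^ k * 2 ^ (2 * k + 1) * r k
      = 2 * (4 ^ k * pochhammer (1/2) k / fact k) * ((real k + 1) + 1/2) / (real k + 1)"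
    unfolding r_pochhammer by (simp only:) (rule regroup; simp flip: power_add)
  also have "\<dots> = 2 * real ((2 * k) choose k) + real ((2 * k) choose k) / (real k + 1)"
    unfolding central_binomial_pochhammer[symmetric] by (simp add: field_simps)
  finally show ?thesis .
qed

lemma inv_sqrt_binomial_series:
  fixes x :: real assumes "\<bar>x\<bar> < 1"
  shows "(\<lambda>k. ((-1/2) gchoose k) * x ^ k) sums (1 / sqrt (1 + x))"
proof -
  have "1 + x \<ge> 0" using assms by simp
  then have "(1 + x) powr (-1/2) = 1 / sqrt (1 + x)"
    by (simp add: powr_minus_divide powr_half_sqrt)
  then show ?thesis using gen_binomial_real[OF assms, of "-1/2"] by simp
qed

lemma K2_series:
  fixes w :: real assumes w0: "0 < \<bar>w\<bar>" and w1: "\<bar>w\<bar> < 1"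
  shows "(\<lambda>k. r k * w ^ (2 * k + 1)) sums (K2 w - 1 / w)"
proof -
  define b where "b k = ((-1/2::real) gchoose k) * (w\<^sup>2) ^ k" for k
  define S where "S = 1 / sqrt (1 + w\<^sup>2)"
  have w: "w \<noteq> 0" using w0 by simp
  have "\<bar>w\<^sup>2\<bar> < 1" using w1 by (simp add: abs_square_less_1)
  then have series: "b sums S"
    unfolding b_def S_def by (rule inv_sqrt_binomial_series)
  moreover have "b 0 = 1" by (simp add: b_def)
  ultimately have "(\<lambda>k. b (Suc k)) sums (S - 1)"
    by (simp add: sums_Suc_iff)
  then have "(\<lambda>k. b (Suc k) / w + 2 * w * b k) sums ((S - 1) / w + 2 * w * S)"
    using series by (intro sums_add sums_divide sums_mult)
  moreover have "b (Suc k) / w + 2 * w * b k = r k * w ^ (2 * k + 1)" for k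
  proof -
    have "(w\<^sup>2) ^ k = w ^ (2 * k)" by (simp add: power_mult)
    then show ?thesis
      unfolding b_def r_gchoose using w by (simp add: field_simps power2_eq_square)
  qed
  ultimately show ?thesis
    using K2_minus_reciprocal[OF w] unfolding S_def by simp
qed

text \<open>Induct on the index, dividing off the vanishing initial segment
  and letting w tend to 0 from the right.\<close>
lemma powser_vanishing_at_right:
  fixes c :: "nat \<Rightarrow> real"
  assumes "\<delta> > 0" and vanish: "\<And>w. 0 < w \<Longrightarrow> w < \<delta> \<Longrightarrow> (\<lambda>j. c j * w ^ j) sums 0"
  shows "c n = 0"
proof (induction n rule: less_induct)
  case (less n)
  define e where "e j = c (j + n)" for j
  have e_vanish: "(\<lambda>j. e j * w ^ j) sums 0" if w: "0 < w" "w < \<delta>" for w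
  proof -
    have "(\<lambda>j. c (j + n) * w ^ (j + n)) sums 0"
      using vanish[OF w] sums_iff_shift[of "\<lambda>j. c j * w ^ j" n 0] less by simp
    then have "(\<lambda>j. c (j + n) * w ^ (j + n) / w ^ n) sums (0 / w ^ n)"
      by (rule sums_divide)
    moreover have "c (j + n) * w ^ (j + n) / w ^ n = e j * w ^ j" for j
      using w by (simp add: e_def power_add)
    ultimately show ?thesis by simp
  qed
  define f where "f x = (\<Sum>j. e j * x ^ j)" for x
  have "summable (\<lambda>j. e j * (\<delta>/2) ^ j)"
    using e_vanish[of "\<delta>/2"] \<open>\<delta> > 0\<close> by (simp add: sums_summable)
  then have "isCont f 0"
    unfolding f_def by (rule isCont_powser) (use \<open>\<delta> > 0\<close> in simp)
  then have "(f \<longlongrightarrow> f 0) (at_right 0)"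
    unfolding isCont_def by (rule tendsto_mono[rotated]) (simp add: at_le)
  moreover have "\<forall>\<^sub>F x in at_right 0. f x = 0"
    unfolding eventually_at_right_field f_def
    using \<open>\<delta> > 0\<close> e_vanish by (intro exI[of _ \<delta>]) (auto simp: sums_iff)
  then have "(f \<longlongrightarrow> 0) (at_right 0)"
    by (rule tendsto_eventually)
  ultimately have "f 0 = 0"
    by (rule tendsto_unique[rotated]) simp
  then have "e 0 = 0"
    by (simp add: f_def)
  then show ?case by (simp add: e_def)
qed

text \<open>1/w plus a power series converging near 0 eventually exceeds any bound as w \<rightarrow> 0+;
  this puts the argument of the transform in the half-line where it is injective.\<close>
lemma reciprocal_plus_powser_eventually_gt:
  fixes c :: "nat \<Rightarrow> real"
  assumes "\<delta> > 0" and "summable (\<lambda>j. c j * \<delta> ^ j)"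
  shows "\<forall>\<^sub>F w in at_right 0. 1 / w + (\<Sum>j. c j * w ^ j) > C"
proof -
  define f where "f x = (\<Sum>j. c j * x ^ j)" for x
  have "isCont f 0"
    unfolding f_def by (rule isCont_powser[OF assms(2)]) (use assms(1) in simp)
  then have "(f \<longlongrightarrow> f 0) (at_right 0)"
    unfolding isCont_def by (rule tendsto_mono[rotated]) (simp add: at_le)
  then have "filterlim (\<lambda>w. f w + inverse w) at_top (at_right 0)"
    by (rule filterlim_tendsto_add_at_top) (rule filterlim_inverse_at_top_right)
  then have "\<forall>\<^sub>F w in at_right 0. C < f w + inverse w"
    by (simp add: filterlim_at_top_dense)
  then show ?thesis
    unfolding f_def by (simp add: divide_inverse add.commute)
qed

lemma free_cumulant_seq_eventually:
  assumes "is_free_cumulant_seq \<mu> \<kappa>"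
  shows "\<forall>\<^sub>F w in at_right 0. (\<lambda>j. \<kappa> (Suc j) * w ^ j) sums (\<Sum>j. \<kappa> (Suc j) * w ^ j)
           \<and> cst \<mu> (1 / w + (\<Sum>j. \<kappa> (Suc j) * w ^ j)) = w
           \<and> 1 / w + (\<Sum>j. \<kappa> (Suc j) * w ^ j) > C"
proof -
  obtain \<delta> where "\<delta> > 0" and inverse: "\<forall>w. 0 < w \<and> w < \<delta> \<longrightarrow>
      summable (\<lambda>j. \<kappa> (Suc j) * w ^ j) \<and> cst \<mu> (1 / w + (\<Sum>j. \<kappa> (Suc j) * w ^ j)) = w"
    using assms unfolding is_free_cumulant_seq_def by (elim conjE exE)
  have "summable (\<lambda>j. \<kappa> (Suc j) * (\<delta>/2) ^ j)"
    using inverse \<open>\<delta> > 0\<close> by simp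
  then have "\<forall>\<^sub>F w in at_right 0. 1 / w + (\<Sum>j. \<kappa> (Suc j) * w ^ j) > C"
    using \<open>\<delta> > 0\<close> by (intro reciprocal_plus_powser_eventually_gt[of "\<delta>/2"]) simp_all
  moreover have "\<forall>\<^sub>F w in at_right 0. 0 < w \<and> w < \<delta>"
    using \<open>\<delta> > 0\<close> unfolding eventually_at_right_field by blast
  ultimately show ?thesis
  proof eventually_elim
    case (elim w)
    with inverse have "summable (\<lambda>j. \<kappa> (Suc j) * w ^ j)"
      and "cst \<mu> (1 / w + (\<Sum>j. \<kappa> (Suc j) * w ^ j)) = w" by blast+
    with elim show ?case by (blast intro: summable_sums)
  qed
qed

lemma free_cumulant_seq_unique:
  assumes inj: "inj_on (cst \<mu>) {C<..}"
    and \<kappa>: "is_free_cumulant_seq \<mu> \<kappa>" and \<kappa>': "is_free_cumulant_seq \<mu> \<kappa>'"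
  shows "\<kappa> = \<kappa>'"
proof -
  have "\<forall>\<^sub>F w in at_right 0. (\<lambda>j. (\<kappa> (Suc j) - \<kappa>' (Suc j)) * w ^ j) sums 0"
    using free_cumulant_seq_eventually[OF \<kappa>, of C] free_cumulant_seq_eventually[OF \<kappa>', of C]
  proof eventually_elim
    case (elim w)
    from elim have "cst \<mu> (1 / w + (\<Sum>j. \<kappa> (Suc j) * w ^ j))
        = cst \<mu> (1 / w + (\<Sum>j. \<kappa>' (Suc j) * w ^ j))" by argo
    then have "1 / w + (\<Sum>j. \<kappa> (Suc j) * w ^ j) = 1 / w + (\<Sum>j. \<kappa>' (Suc j) * w ^ j)"
      by (rule inj_onD[OF inj]) (use elim in auto)
    then have same_sum: "(\<Sum>j. \<kappa> (Suc j) * w ^ j) = (\<Sum>j. \<kappa>' (Suc j) * w ^ j)"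
      by simp
    from elim have "(\<lambda>j. \<kappa> (Suc j) * w ^ j - \<kappa>' (Suc j) * w ^ j)
        sums ((\<Sum>j. \<kappa> (Suc j) * w ^ j) - (\<Sum>j. \<kappa>' (Suc j) * w ^ j))"
      by (intro sums_diff) auto
    then show ?case
      unfolding same_sum by (simp add: left_diff_distrib)
  qed
  then obtain \<delta> where "\<delta> > 0"
    and "\<forall>w>0. w < \<delta> \<longrightarrow> (\<lambda>j. (\<kappa> (Suc j) - \<kappa>' (Suc j)) * w ^ j) sums 0"
    unfolding eventually_at_right_field by blast
  then have Suc: "\<kappa> (Suc j) - \<kappa>' (Suc j) = 0" for j
    by (intro powser_vanishing_at_right) auto
  have zero: "\<kappa> 0 = \<kappa>' 0"
    using \<kappa> \<kappa>' by (simp add: is_free_cumulant_seq_def)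
  show ?thesis
  proof
    fix j show "\<kappa> j = \<kappa>' j"
      using zero Suc by (cases j) auto
  qed
qed

definition kappa2 :: "nat \<Rightarrow> real" where
  "kappa2 j = (if odd j \<or> j = 0 then 0 else r (j div 2 - 1))"

lemma kappa2_series:
  fixes w :: real assumes "0 < w" "w < 1"
  shows "(\<lambda>j. kappa2 (Suc j) * w ^ j) sums (K2 w - 1 / w)"
proof -
  have "(\<lambda>k. kappa2 (Suc (2 * k + 1)) * w ^ (2 * k + 1)) sums (K2 w - 1 / w)"
    using K2_series[of w] assms by (simp add: kappa2_def)
  moreover have "kappa2 (Suc j) * w ^ j = 0" if "j \<notin> range (\<lambda>k. 2 * k + 1)" for j
    using that by (auto simp: kappa2_def elim: oddE)
  moreover have "strict_mono (\<lambda>k::nat. 2 * k + 1)"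
    by (rule strict_monoI) simp
  ultimately show ?thesis
    using sums_mono_reindex[of "\<lambda>k. 2 * k + 1" "\<lambda>j. kappa2 (Suc j) * w ^ j"] by blast
qed

lemma kappa2_free_cumulant_seq:
  assumes transform: "\<And>z. z > 2 \<Longrightarrow> cst \<nu> z = T2 z"
  shows "is_free_cumulant_seq \<nu> kappa2"
  unfolding is_free_cumulant_seq_def
proof (intro conjI exI[of _ 1] allI impI)
  fix w :: real assume w: "0 < w \<and> w < 1"
  then have series: "(\<lambda>j. kappa2 (Suc j) * w ^ j) sums (K2 w - 1 / w)"
    by (intro kappa2_series) auto
  then show "summable (\<lambda>j. kappa2 (Suc j) * w ^ j)"
    by (rule sums_summable)
  have "1 / w + (\<Sum>j. kappa2 (Suc j) * w ^ j) = K2 w"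
    using series by (simp add: sums_iff)
  then show "cst \<nu> (1 / w + (\<Sum>j. kappa2 (Suc j) * w ^ j)) = w"
    using transform[OF K2_gt_2] T2_K2 w by simp
qed (simp_all add: kappa2_def)

lemma free_cumulant_kappa2:
  assumes transform: "\<And>z. z > 2 \<Longrightarrow> cst \<nu> z = T2 z"
  shows "free_cumulant \<nu> = kappa2"
proof -
  have inj: "inj_on (cst \<nu>) {2<..}"
    using T2_inj_on transform by (simp add: inj_on_def)
  have kappa2: "is_free_cumulant_seq \<nu> kappa2"
    using transform by (rule kappa2_free_cumulant_seq)
  have "(THE \<kappa>. is_free_cumulant_seq \<nu> \<kappa>) = kappa2"
  proof (rule the_equality)
    fix \<kappa> assume "is_free_cumulant_seq \<nu> \<kappa>"
    then show "\<kappa> = kappa2"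
      using inj kappa2 by (intro free_cumulant_seq_unique)
  qed (rule kappa2)
  then show ?thesis
    unfolding free_cumulant_def by (simp add: fun_eq_iff)
qed

theorem mainTheorem8:
  fixes \<nu>2 :: "real measure"
  assumes prob: "prob_space \<nu>2"
    and borel: "sets \<nu>2 = sets borel"
    and supp: "measure \<nu>2 {-2..2} = 1"
    and transform: "\<And>z. z > 2 \<Longrightarrow> cst \<nu>2 z = T2 z"
  shows "(\<forall>\<^sub>F w in at_right 0. K2 w > 2 \<and> T2 (K2 w) = w)
    \<and> (\<forall>w::real. 0 < \<bar>w\<bar> \<and> \<bar>w\<bar> < 1 \<longrightarrow>
          (\<lambda>k. r k * w ^ (2 * k + 1)) sums (K2 w - 1 / w))
    \<and> (\<forall>k. r k = (-1) ^ k * pochhammer (1/2) k * (real k + 3/2) / fact (k + 1))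
    \<and> (\<forall>k. (-1) ^ k * 2 ^ (2 * k + 1) * r k
           = 2 * real ((2 * k) choose k) + real ((2 * k) choose k) / (real k + 1))
    \<and> (\<forall>k. free_cumulant \<nu>2 (2 * k + 2) = r k)
    \<and> free_cumulant \<nu>2 2 = 3 / 2
    \<and> (\<forall>k. free_cumulant \<nu>2 (2 * k + 1) = 0)"
proof -
  have inverse: "\<forall>\<^sub>F w in at_right 0. K2 w > 2 \<and> T2 (K2 w) = w"
    unfolding eventually_at_right_field by (intro exI[of _ 1]) (auto simp: K2_gt_2 T2_K2)
  have cumulants: "free_cumulant \<nu>2 = kappa2"
    using transform by (rule free_cumulant_kappa2)
  show ?thesis
  proof (intro conjI allI impI inverse)
    fix w :: real assume "0 < \<bar>w\<bar> \<and> \<bar>w\<bar> < 1"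
    then show "(\<lambda>k. r k * w ^ (2 * k + 1)) sums (K2 w - 1 / w)"
      by (intro K2_series) auto
  next
    fix k
    show "r k = (-1) ^ k * pochhammer (1/2) k * (real k + 3/2) / fact (k + 1)"
      by (rule r_pochhammer)
    show "(-1) ^ k * 2 ^ (2 * k + 1) * r k
        = 2 * real ((2 * k) choose k) + real ((2 * k) choose k) / (real k + 1)"
      by (rule r_central_binomial)
    show "free_cumulant \<nu>2 (2 * k + 2) = r k" "free_cumulant \<nu>2 (2 * k + 1) = 0"
      unfolding cumulants kappa2_def by simp_all
  next
    show "free_cumulant \<nu>2 2 = 3 / 2"
      unfolding cumulants kappa2_def by (simp add: r_def)
  qed
qed

end
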